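(* Let $\mathbf{k}$ be a field, $p\ge3$ an integer, $S=\mathbf{k}[e_1,\dots,e_{2p}]$, and let $\mathcal{F}$ be the total complex defined below. Then $H_i(\mathcal{F})=0$ for all $i\neq0$.
   Context: Let $V=\operatorname{span}_{\mathbf{k}}(e_1,\dots,e_{p-1})$ and $W=\operatorname{span}_{\mathbf{k}}(e_{p+1},\dots,e_{2p-1})$ inside $S_1$. For $U\in\{V,W\}$, the Koszul differential $\partial^U:S\otimes_{\mathbf{k}}\bigwedge^kU\to S\otimes_{\mathbf{k}}\bigwedge^{k-1}U$ is $s\otimes u_1\wedge\cdots\wedge u_k\mapsto\sum_{l=1}^k(-1)^lsu_l\otimes u_1\wedge\cdots\widehat{u_l}\cdots\wedge u_k$. For $a,b\ge0$ let $C_{a,b}=S\otimes\bigwedge^{a+2}V\otimes\bigwedge^bW$, with horizontal maps $\partial^h=\partial^V\otimes1:C_{a,b}\to C_{a-1,b}$ (zero for $a=0$) and vertical maps $\partial^v:C_{a,b}\to C_{a,b-1}$, $s\otimes\omega\otimes w_1\wedge\cdots\wedge w_b\mapsto(-1)^a\sum_{l=1}^b(-1)^lsw_l\otimes\omega\otimes w_1\wedge\cdots\widehat{w_l}\cdots\wedge w_b$. $\mathcal{F}$ is the total complex: $\mathcal{F}_n=\bigoplus_{a+b=n}C_{a,b}$ with differential $\partial^h+\partial^v$. *)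

theory Defs
  imports "HOL-Library.Poly_Mapping"
begin

text \<open>The ring S = k[e_1,...,e_2p] is the subring of polynomials all of whose monomials
  only involve the variables 1..2p.\<close>

type_synonym 'k poly_ring = "(nat \<Rightarrow>\<^sub>0 nat) \<Rightarrow>\<^sub>0 'k"

definition var :: "nat \<Rightarrow> 'k::field poly_ring" where
  "var i = Poly_Mapping.single (Poly_Mapping.single i 1) 1"

definition in_S :: "nat \<Rightarrow> 'k::field poly_ring \<Rightarrow> bool" where
  "in_S p f \<longleftrightarrow> (\<forall>m \<in> Poly_Mapping.keys f. Poly_Mapping.keys m \<subseteq> {1..2*p})"

text \<open>Index sets of the basis vectors e_1..e_{p-1} of V and e_{p+1}..e_{2p-1} of W.\<close>
definition Vidx :: "nat \<Rightarrow> nat set" where "Vidx p = {1..p-1}"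
definition Widx :: "nat \<Rightarrow> nat set" where "Widx p = {p+1..2*p-1}"

definition pos :: "nat set \<Rightarrow> nat \<Rightarrow> nat" where
  "pos A i = card {a \<in> A. a \<le> i}"

text \<open>An element of F_n = (+)_{a+b=n} S (x) /\^(a+2) V (x) /\^b W is a coefficient map
  (A,B) \<mapsto> coefficient in S of the basis vector e_A (x) e_B, where A \<subseteq> Vidx, B \<subseteq> Widx,
  |A| = a+2, |B| = b, and e_A is the wedge of the e_i, i \<in> A, in increasing order.\<close>
definition valid_idx :: "nat \<Rightarrow> nat \<Rightarrow> nat set \<times> nat set \<Rightarrow> bool" where
  "valid_idx p n AB \<longleftrightarrow> fst AB \<subseteq> Vidx p \<and> snd AB \<subseteq> Widx p \<and> 2 \<le> card (fst AB)
      \<and> card (fst AB) + card (snd AB) = n + 2"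

definition chainF :: "nat \<Rightarrow> nat \<Rightarrow> (nat set \<times> nat set \<Rightarrow> 'k::field poly_ring) \<Rightarrow> bool" where
  "chainF p n c \<longleftrightarrow> (\<forall>AB. (valid_idx p n AB \<longrightarrow> in_S p (c AB)) \<and> (\<not> valid_idx p n AB \<longrightarrow> c AB = 0))"

text \<open>Horizontal differential \<partial>^V \<otimes> 1 (zero out of a = 0, i.e. onto |A'| < 2),
  written in coordinates: the coefficient of e_A' (x) e_B' in \<partial>^h c.\<close>
definition dh :: "nat \<Rightarrow> (nat set \<times> nat set \<Rightarrow> 'k::field poly_ring) \<Rightarrow> nat set \<times> nat set \<Rightarrow> 'k poly_ring" where
  "dh p c = (\<lambda>(A', B'). if A' \<subseteq> Vidx p \<and> B' \<subseteq> Widx p \<and> 2 \<le> card A' then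
      (\<Sum>i \<in> Vidx p - A'. (-1) ^ pos (insert i A') i * var i * c (insert i A', B'))
    else 0)"

text \<open>Vertical differential (-1)^a (1 \<otimes> \<partial>^W), a = |A| - 2, in coordinates.\<close>
definition dv :: "nat \<Rightarrow> (nat set \<times> nat set \<Rightarrow> 'k::field poly_ring) \<Rightarrow> nat set \<times> nat set \<Rightarrow> 'k poly_ring" where
  "dv p c = (\<lambda>(A', B'). if A' \<subseteq> Vidx p \<and> B' \<subseteq> Widx p \<and> 2 \<le> card A' then
      (-1) ^ (card A' - 2) *
      (\<Sum>j \<in> Widx p - B'. (-1) ^ pos (insert j B') j * var j * c (A', insert j B'))
    else 0)"

definition dF :: "nat \<Rightarrow> (nat set \<times> nat set \<Rightarrow> 'k::field poly_ring) \<Rightarrow> nat set \<times> nat set \<Rightarrow> 'k poly_ring" where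
  "dF p c = (\<lambda>AB. dh p c AB + dv p c AB)"

end

theory Submission
  imports Defs
begin

(* For fixed A the columns of F are, up to sign, Koszul complexes of S on the variables of W, and
   for fixed B the rows are Koszul complexes on the variables of V truncated below wedge^2 V.
   The Koszul complex on a set I of variables contracts onto its degree-0 homology
   S / (x_i : i in I) by an explicit homotopy, which divides each monomial by the least variable
   of I dividing it. Applying the column homotopy to a cycle c of positive degree n leaves only
   the W-free part of its components with B = {}. That residue is a cycle of the row complex in
   exterior degree n + 2 >= 3, where the truncation is invisible, so the row homotopy kills it. *)

alias lookup = Poly_Mapping.lookup
alias keys = Poly_Mapping.keys
alias single = Poly_Mapping.single

lemma lookup_var_mult:
  "lookup (var j * (s :: 'k::field poly_ring)) m =
     (if lookup m j = 0 then 0 else lookup s (m - single j 1))"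
proof -
  have "lookup (var j * s) m = (\<Sum>q. lookup s q when m = single j 1 + q)"
    unfolding var_def lookup_mult by (simp add: lookup_single when_mult when_when)
  also have "\<dots> = (if lookup m j = 0 then 0 else lookup s (m - single j 1))"
  proof (cases "lookup m j = 0")
    case True
    then have "m \<noteq> single j 1 + q" for q
      by (metis lookup_add lookup_single_eq add_is_0 one_neq_zero)
    then show ?thesis using True by simp
  next
    case False
    then have "m = single j 1 + q \<longleftrightarrow> q = m - single j 1" for q
      by (auto simp: poly_mapping_eq_iff fun_eq_iff lookup_add lookup_minus lookup_single when_def)
    then show ?thesis using False by simp
  qed
  finally show ?thesis .
qed

definition avoids :: "nat set \<Rightarrow> (nat \<Rightarrow>\<^sub>0 nat) \<Rightarrow> bool" where
  "avoids T m \<longleftrightarrow> (\<forall>i\<in>T. lookup m i = 0)"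

definition quot_avoiding ::
    "nat set \<Rightarrow> (nat \<Rightarrow>\<^sub>0 nat) \<Rightarrow> ((nat \<Rightarrow>\<^sub>0 nat) \<Rightarrow>\<^sub>0 'a::zero) \<Rightarrow>
      (nat \<Rightarrow>\<^sub>0 nat) \<Rightarrow>\<^sub>0 'a" where
  "quot_avoiding T e s = Abs_poly_mapping (\<lambda>m. if avoids T m then lookup s (m + e) else 0)"

lemma lookup_quot_avoiding:
  "lookup (quot_avoiding T e s) m = (if avoids T m then lookup s (m + e) else 0)"
proof -
  have "{m. (if avoids T m then lookup s (m + e) else 0) \<noteq> 0} \<subseteq> (\<lambda>k. k - e) ` keys s"
  proof
    fix m assume "m \<in> {m. (if avoids T m then lookup s (m + e) else 0) \<noteq> 0}"
    then have "m + e \<in> keys s" by (cases "avoids T m") (simp_all add: in_keys_iff)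
    then show "m \<in> (\<lambda>k. k - e) ` keys s" by (rule rev_image_eqI) simp
  qed
  then have "finite {m. (if avoids T m then lookup s (m + e) else 0) \<noteq> 0}"
    by (rule finite_subset) simp
  then show ?thesis unfolding quot_avoiding_def by simp
qed

lemma quot_avoiding_0 [simp]: "quot_avoiding T e 0 = 0"
  by (rule poly_mapping_eqI) (simp add: lookup_quot_avoiding)

lemma quot_avoiding_uminus: "quot_avoiding T e (- a) = - quot_avoiding T e a"
  by (rule poly_mapping_eqI) (simp add: lookup_quot_avoiding)

lemma quot_avoiding_diff: "quot_avoiding T e (a - b) = quot_avoiding T e a - quot_avoiding T e b"
  by (rule poly_mapping_eqI) (simp add: lookup_quot_avoiding lookup_minus)

lemma quot_avoiding_sum: "quot_avoiding T e (sum f A) = (\<Sum>x\<in>A. quot_avoiding T e (f x))"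
  by (rule poly_mapping_eqI) (simp add: lookup_quot_avoiding lookup_sum)

lemma quot_avoiding_neg_one_power_mult:
  "quot_avoiding T e ((-1) ^ k * (s :: (nat \<Rightarrow>\<^sub>0 nat) \<Rightarrow>\<^sub>0 'a::comm_ring_1)) =
     (-1) ^ k * quot_avoiding T e s"
  by (simp add: minus_one_power_iff quot_avoiding_uminus)

lemma quot_avoiding_var_mult:
  assumes "k \<notin> T" "lookup e k = 0"
  shows "quot_avoiding T e (var k * s) = var k * quot_avoiding T e s"
proof (rule poly_mapping_eqI)
  fix m :: "nat \<Rightarrow>\<^sub>0 nat"
  have k: "lookup (m + e) k = lookup m k" using assms by (simp add: lookup_add)
  show "lookup (quot_avoiding T e (var k * s)) m = lookup (var k * quot_avoiding T e s) m"
  proof (cases "lookup m k = 0")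
    case True
    then show ?thesis by (simp add: lookup_quot_avoiding lookup_var_mult k)
  next
    case False
    have "m + e - single k 1 = m - single k 1 + e"
      using assms False
      by (auto simp: poly_mapping_eq_iff fun_eq_iff lookup_add lookup_minus lookup_single when_def)
    moreover have "avoids T (m - single k 1) = avoids T m"
      using assms False by (auto simp: avoids_def lookup_minus lookup_single when_def)
    ultimately show ?thesis using False by (simp add: lookup_quot_avoiding lookup_var_mult k)
  qed
qed

lemma quot_avoiding_var_mult_eq_0:
  assumes "k \<in> T" "lookup e k = 0"
  shows "quot_avoiding T e (var k * s) = 0"
  by (rule poly_mapping_eqI)
    (use assms in \<open>auto simp: lookup_quot_avoiding lookup_var_mult avoids_def lookup_add\<close>)

lemma quot_avoiding_var_mult_self:
  assumes "j \<notin> T"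
  shows "quot_avoiding T (single j 1) (var j * s) = quot_avoiding T 0 s"
  by (rule poly_mapping_eqI) (simp add: lookup_quot_avoiding lookup_var_mult lookup_add)

lemma lookup_var_mult_quot_avoiding_self:
  assumes "j \<notin> T"
  shows "lookup (var j * quot_avoiding T (single j 1) s) m =
    (if lookup m j \<noteq> 0 \<and> avoids T m then lookup s m else 0)"
proof (cases "lookup m j = 0")
  case True
  then show ?thesis by (simp add: lookup_quot_avoiding lookup_var_mult)
next
  case False
  have "m - single j 1 + single j 1 = m"
    using False by (auto simp: poly_mapping_eq_iff fun_eq_iff lookup_add lookup_minus lookup_single when_def)
  moreover have "avoids T (m - single j 1) = avoids T m"
    using assms False by (auto simp: avoids_def lookup_minus lookup_single when_def)
  ultimately show ?thesis using False by (simp add: lookup_quot_avoiding lookup_var_mult)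
qed

(* For j in I, the monomials of s whose least variable from I is x_j, divided by x_j. *)
definition least_var_quot :: "nat set \<Rightarrow> nat \<Rightarrow> 'k::field poly_ring \<Rightarrow> 'k poly_ring" where
  "least_var_quot I j = quot_avoiding {i \<in> I. i < j} (single j 1)"

lemma least_var_dividing:
  assumes "finite T"
  shows "{j \<in> T. lookup m j \<noteq> 0 \<and> avoids {i \<in> T. i < j} m} =
    (if avoids T m then {} else {Min {i \<in> T. lookup m i \<noteq> 0}})"
proof (cases "avoids T m")
  case False
  define D where "D = {i \<in> T. lookup m i \<noteq> 0}"
  have "finite D" "D \<noteq> {}"
    using assms False by (auto simp: D_def avoids_def)
  then have "Min D \<in> D" "\<forall>i\<in>D. Min D \<le> i"
    by simp_all
  then have min: "Min D \<in> T" "lookup m (Min D) \<noteq> 0" "\<forall>i\<in>T. lookup m i \<noteq> 0 \<longrightarrow> Min D \<le> i"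
    unfolding D_def by blast+
  have "j = Min D" if "j \<in> T" "lookup m j \<noteq> 0" "avoids {i \<in> T. i < j} m" for j
  proof -
    have "Min D \<le> j" using min(3) that(1,2) by blast
    moreover have "\<not> Min D < j" using min(1,2) that(3) by (auto simp: avoids_def)
    ultimately show ?thesis by simp
  qed
  moreover have "avoids {i \<in> T. i < Min D} m"
    using min(3) by (auto simp: avoids_def dest: leD)
  ultimately have "{j \<in> T. lookup m j \<noteq> 0 \<and> avoids {i \<in> T. i < j} m} = {Min D}"
    using min(1,2) by blast
  then show ?thesis using False by (simp add: D_def)
qed (auto simp: avoids_def)

lemma sum_var_mult_least_var_quot:
  assumes "finite T"
  shows "(\<Sum>j\<in>T. var j * least_var_quot T j s) + quot_avoiding T 0 s = s"
proof (rule poly_mapping_eqI)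
  fix m
  have "lookup (\<Sum>j\<in>T. var j * least_var_quot T j s) m =
      (\<Sum>j\<in>T. if lookup m j \<noteq> 0 \<and> avoids {i \<in> T. i < j} m then lookup s m else 0)"
    unfolding lookup_sum least_var_quot_def
    by (intro sum.cong refl lookup_var_mult_quot_avoiding_self) simp
  also have "\<dots> = (\<Sum>j\<in>{j \<in> T. lookup m j \<noteq> 0 \<and> avoids {i \<in> T. i < j} m}. lookup s m)"
    using assms by (rule sum.inter_filter[symmetric])
  also have "\<dots> = (if avoids T m then 0 else lookup s m)"
    unfolding least_var_dividing[OF assms] by simp
  finally show "lookup ((\<Sum>j\<in>T. var j * least_var_quot T j s) + quot_avoiding T 0 s) m = lookup s m"
    by (simp add: lookup_add lookup_quot_avoiding)
qed

(* A map g on subsets of I stands for the element of S (x) wedge U, U = span {e_i : i in I},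
   whose coefficient at e_B is g B; koszul_diff I g B is the e_B-coefficient of its Koszul
   differential. *)
definition koszul_diff :: "nat set \<Rightarrow> (nat set \<Rightarrow> 'k::field poly_ring) \<Rightarrow> nat set \<Rightarrow> 'k poly_ring" where
  "koszul_diff I g B = (if B \<subseteq> I then
     (\<Sum>j\<in>I - B. (-1) ^ pos (insert j B) j * var j * g (insert j B)) else 0)"

definition koszul_homotopy :: "nat set \<Rightarrow> (nat set \<Rightarrow> 'k::field poly_ring) \<Rightarrow> nat set \<Rightarrow> 'k poly_ring" where
  "koszul_homotopy I g B =
     (if B \<subseteq> I \<and> B \<noteq> {} then - least_var_quot I (Min B) (g (B - {Min B})) else 0)"

definition koszul_proj :: "nat set \<Rightarrow> (nat set \<Rightarrow> 'k::field poly_ring) \<Rightarrow> nat set \<Rightarrow> 'k poly_ring" where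
  "koszul_proj I g B = (if B = {} then quot_avoiding I 0 (g {}) else 0)"

lemma koszul_diff_cong:
  "(\<And>j. j \<in> I - B \<Longrightarrow> g (insert j B) = h (insert j B)) \<Longrightarrow> koszul_diff I g B = koszul_diff I h B"
  unfolding koszul_diff_def by (auto intro!: sum.cong)

lemma koszul_diff_add: "koszul_diff I (\<lambda>B. f B + g B) B = koszul_diff I f B + koszul_diff I g B"
  unfolding koszul_diff_def by (simp add: sum.distrib distrib_left)

lemma koszul_diff_neg_one_power_mult:
  "koszul_diff I (\<lambda>B. (-1) ^ k * g B) B = (-1) ^ k * koszul_diff I g B"
  unfolding koszul_diff_def by (simp add: sum_distrib_left ac_simps)

lemma koszul_diff_uminus: "koszul_diff I (\<lambda>B. - g B) B = - koszul_diff I g B"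
  unfolding koszul_diff_def by (simp add: sum_negf)

lemma koszul_diff_0: "koszul_diff I (\<lambda>_. 0) B = 0"
  unfolding koszul_diff_def by simp

lemma quot_avoiding_koszul_diff:
  assumes "J \<inter> T = {}" "\<forall>i\<in>J. lookup e i = 0"
  shows "quot_avoiding T e (koszul_diff J g A) = koszul_diff J (\<lambda>A. quot_avoiding T e (g A)) A"
proof -
  have "quot_avoiding T e ((-1) ^ k * var j * s) = (-1) ^ k * var j * quot_avoiding T e s"
    if "j \<in> J" for j k s
  proof -
    have "j \<notin> T" "lookup e j = 0" using that assms by auto
    then show ?thesis by (simp add: mult.assoc quot_avoiding_neg_one_power_mult quot_avoiding_var_mult)
  qed
  then show ?thesis
    unfolding koszul_diff_def by (auto simp: quot_avoiding_sum intro!: sum.cong)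
qed

lemma quot_avoiding_koszul_diff_eq_0:
  assumes "J \<subseteq> T" "\<forall>i\<in>J. lookup e i = 0"
  shows "quot_avoiding T e (koszul_diff J g A) = 0"
proof -
  have "quot_avoiding T e ((-1) ^ k * var j * s) = 0" if "j \<in> J" for j k s
  proof -
    have "j \<in> T" "lookup e j = 0" using that assms by auto
    then show ?thesis by (simp add: mult.assoc quot_avoiding_neg_one_power_mult quot_avoiding_var_mult_eq_0)
  qed
  then show ?thesis
    unfolding koszul_diff_def by (auto simp: quot_avoiding_sum intro!: sum.neutral)
qed

lemma koszul_homotopy_cong:
  "(\<And>B. B \<subseteq> I \<Longrightarrow> g B = h B) \<Longrightarrow> koszul_homotopy I g B = koszul_homotopy I h B"
  unfolding koszul_homotopy_def by (metis Diff_subset order_trans)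

lemma koszul_homotopy_neg_one_power_mult:
  "koszul_homotopy I (\<lambda>B. (-1) ^ k * g B) B = (-1) ^ k * koszul_homotopy I g B"
  unfolding koszul_homotopy_def least_var_quot_def by (simp add: quot_avoiding_neg_one_power_mult)

lemma koszul_homotopy_neq_0D:
  "koszul_homotopy I g B \<noteq> 0 \<Longrightarrow> B \<subseteq> I \<and> B \<noteq> {} \<and> g (B - {Min B}) \<noteq> 0"
  unfolding koszul_homotopy_def least_var_quot_def by (auto split: if_splits)

lemma koszul_homotopy_koszul_diff_commute:
  assumes "finite I" "I \<inter> J = {}"
  shows "koszul_homotopy I (\<lambda>B. koszul_diff J (\<lambda>A. c A B) A') B' =
    koszul_diff J (\<lambda>A. koszul_homotopy I (c A) B') A'"
proof (cases "B' \<subseteq> I \<and> B' \<noteq> {}")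
  case True
  then have "Min B' \<in> I" using assms(1) by (meson Min_in finite_subset subsetD)
  then have "least_var_quot I (Min B') (koszul_diff J h A') =
      koszul_diff J (\<lambda>A. least_var_quot I (Min B') (h A)) A'" for h
    unfolding least_var_quot_def using assms(2)
    by (intro quot_avoiding_koszul_diff) (auto simp: lookup_single when_def)
  then show ?thesis
    using True by (simp add: koszul_homotopy_def koszul_diff_uminus)
next
  case False
  then have homotopy_0: "koszul_homotopy I h B' = 0" for h
    unfolding koszul_homotopy_def by (rule if_not_P)
  show ?thesis by (simp add: homotopy_0 koszul_diff_0)
qed

lemma pos_insert_least:
  assumes "finite B" "\<forall>b\<in>B. j < b"
  shows "pos (insert j B) j = 1"
proof -
  have "{a \<in> insert j B. a \<le> j} = {j}" using assms by force
  then show ?thesis by (simp add: pos_def)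
qed

lemma pos_insert_insert_less:
  assumes "finite B" "\<mu> \<notin> B" "\<mu> < j"
  shows "pos (insert j (insert \<mu> B)) j = Suc (pos (insert j B) j)"
proof -
  have "{a \<in> insert j (insert \<mu> B). a \<le> j} = insert \<mu> {a \<in> insert j B. a \<le> j}"
    using assms by auto
  then show ?thesis using assms by (simp add: pos_def)
qed

lemma sum_Diff_split_Min:
  assumes "finite I" "finite B" "B \<noteq> {}"
  shows "(\<Sum>j\<in>I - B. f j) = (\<Sum>j\<in>{j \<in> I. j < Min B}. f j) + (\<Sum>j\<in>{j \<in> I - B. Min B < j}. f j)"
proof -
  have min: "Min B \<in> B" "\<forall>b\<in>B. Min B \<le> b" using assms(2,3) by simp_all
  have "I - B = {j \<in> I. j < Min B} \<union> {j \<in> I - B. Min B < j}"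
  proof (intro equalityI subsetI)
    fix j assume j: "j \<in> I - B"
    then have "j \<noteq> Min B" using min(1) by blast
    then show "j \<in> {j \<in> I. j < Min B} \<union> {j \<in> I - B. Min B < j}"
      using j by (auto simp: nat_neq_iff)
  next
    fix j assume "j \<in> {j \<in> I. j < Min B} \<union> {j \<in> I - B. Min B < j}"
    then show "j \<in> I - B" using min(2) by (auto dest: leD)
  qed
  then have "(\<Sum>j\<in>I - B. f j) = (\<Sum>j\<in>{j \<in> I. j < Min B} \<union> {j \<in> I - B. Min B < j}. f j)"
    by (rule arg_cong)
  also have "\<dots> = (\<Sum>j\<in>{j \<in> I. j < Min B}. f j) + (\<Sum>j\<in>{j \<in> I - B. Min B < j}. f j)"
    by (rule sum.union_disjoint) (use assms(1) in auto)
  finally show ?thesis .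
qed

lemma koszul_diff_homotopy_nonempty:
  fixes g :: "nat set \<Rightarrow> 'k::field poly_ring"
  assumes "finite I" "B \<subseteq> I" "B \<noteq> {}"
  defines "\<mu> \<equiv> Min B"
  shows "koszul_diff I (koszul_homotopy I g) B =
    (\<Sum>j\<in>{j \<in> I. j < \<mu>}. var j * least_var_quot I j (g B)) +
    (\<Sum>j\<in>{j \<in> I - B. \<mu> < j}. (-1) ^ pos (insert j (B - {\<mu>})) j * var j *
        least_var_quot I \<mu> (g (insert j (B - {\<mu>}))))"
proof -
  have finB: "finite B" using assms(2,1) by (rule finite_subset)
  have \<mu>: "\<mu> \<in> B" "\<forall>b\<in>B. \<mu> \<le> b" using finB assms(3) by (auto simp: \<mu>_def)
  let ?t = "\<lambda>j. (-1) ^ pos (insert j B) j * var j * koszul_homotopy I g (insert j B)"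
  have "koszul_diff I (koszul_homotopy I g) B = (\<Sum>j\<in>I - B. ?t j)"
    using assms by (simp add: koszul_diff_def)
  also have "\<dots> = (\<Sum>j\<in>{j \<in> I. j < \<mu>}. ?t j) + (\<Sum>j\<in>{j \<in> I - B. \<mu> < j}. ?t j)"
    unfolding \<mu>_def by (rule sum_Diff_split_Min[OF assms(1) finB assms(3)])
  also have "(\<Sum>j\<in>{j \<in> I. j < \<mu>}. ?t j) = (\<Sum>j\<in>{j \<in> I. j < \<mu>}. var j * least_var_quot I j (g B))"
  proof (rule sum.cong[OF refl])
    fix j assume j: "j \<in> {j \<in> I. j < \<mu>}"
    then have "\<forall>b\<in>B. j < b" using \<mu> by auto
    then have "Min (insert j B) = j" "insert j B - {j} = B" "pos (insert j B) j = 1"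
      using finB assms(3) by (auto simp: Min_insert pos_insert_least)
    then show "?t j = var j * least_var_quot I j (g B)"
      using j assms(2) by (simp add: koszul_homotopy_def)
  qed
  also have "(\<Sum>j\<in>{j \<in> I - B. \<mu> < j}. ?t j) = (\<Sum>j\<in>{j \<in> I - B. \<mu> < j}.
      (-1) ^ pos (insert j (B - {\<mu>})) j * var j * least_var_quot I \<mu> (g (insert j (B - {\<mu>}))))"
  proof (rule sum.cong[OF refl])
    fix j assume j: "j \<in> {j \<in> I - B. \<mu> < j}"
    have "pos (insert j B) j = Suc (pos (insert j (B - {\<mu>})) j)"
      using pos_insert_insert_less[of "B - {\<mu>}" \<mu> j] finB j \<mu>(1) by (simp add: insert_absorb)
    moreover have "Min (insert j B) = \<mu>" "insert j B - {\<mu>} = insert j (B - {\<mu>})"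
      using finB assms(3) j by (auto simp: \<mu>_def Min_insert)
    ultimately show "?t j = (-1) ^ pos (insert j (B - {\<mu>})) j * var j *
        least_var_quot I \<mu> (g (insert j (B - {\<mu>})))"
      using j assms(2) by (simp add: koszul_homotopy_def)
  qed
  finally show ?thesis .
qed

lemma koszul_homotopy_diff_nonempty:
  fixes g :: "nat set \<Rightarrow> 'k::field poly_ring"
  assumes "finite I" "B \<subseteq> I" "B \<noteq> {}"
  defines "\<mu> \<equiv> Min B"
  shows "koszul_homotopy I (koszul_diff I g) B =
    quot_avoiding {j \<in> I. j < \<mu>} 0 (g B) -
    (\<Sum>j\<in>{j \<in> I - B. \<mu> < j}. (-1) ^ pos (insert j (B - {\<mu>})) j * var j *
        least_var_quot I \<mu> (g (insert j (B - {\<mu>}))))"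
proof -
  define B0 where "B0 = B - {\<mu>}"
  have finB: "finite B" using assms(2,1) by (rule finite_subset)
  have "\<mu> \<in> B" "\<forall>b\<in>B. \<mu> \<le> b" using finB assms(3) by (auto simp: \<mu>_def)
  then have B: "B = insert \<mu> B0" "\<forall>b\<in>B0. \<mu> < b" "\<mu> \<notin> B0" "finite B0" "B0 \<subseteq> I"
    using finB assms(2) by (auto simp: B0_def)
  let ?t = "\<lambda>j. (-1) ^ pos (insert j B0) j * var j * g (insert j B0)"
  have "I - B0 = insert \<mu> (I - B)" using B(1,3) assms(2) by auto
  then have "koszul_diff I g B0 = (\<Sum>j\<in>insert \<mu> (I - B). ?t j)"
    using B(5) by (simp add: koszul_diff_def)
  also have "\<dots> = - (var \<mu> * g B) + (\<Sum>j\<in>I - B. ?t j)"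
    using B assms(1) by (simp add: pos_insert_least)
  finally have "koszul_homotopy I (koszul_diff I g) B =
      least_var_quot I \<mu> (var \<mu> * g B) - (\<Sum>j\<in>I - B. least_var_quot I \<mu> (?t j))"
    using assms(2,3)
    by (simp add: koszul_homotopy_def B0_def \<mu>_def least_var_quot_def quot_avoiding_diff
        quot_avoiding_sum)
  also have "least_var_quot I \<mu> (var \<mu> * g B) = quot_avoiding {j \<in> I. j < \<mu>} 0 (g B)"
    unfolding least_var_quot_def by (rule quot_avoiding_var_mult_self) simp
  also have "(\<Sum>j\<in>I - B. least_var_quot I \<mu> (?t j)) =
      (\<Sum>j\<in>{j \<in> I. j < \<mu>}. least_var_quot I \<mu> (?t j)) +
      (\<Sum>j\<in>{j \<in> I - B. \<mu> < j}. least_var_quot I \<mu> (?t j))"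
    unfolding \<mu>_def by (rule sum_Diff_split_Min[OF assms(1) finB assms(3)])
  also have "(\<Sum>j\<in>{j \<in> I. j < \<mu>}. least_var_quot I \<mu> (?t j)) = 0"
  proof (rule sum.neutral, clarify)
    fix j assume "j \<in> I" "j < \<mu>"
    then have "j \<in> {i \<in> I. i < \<mu>}" "lookup (single \<mu> 1) j = (0::nat)"
      by (auto simp: lookup_single when_def)
    then show "least_var_quot I \<mu> (?t j) = 0"
      unfolding least_var_quot_def mult.assoc quot_avoiding_neg_one_power_mult
      by (simp add: quot_avoiding_var_mult_eq_0)
  qed
  also have "(\<Sum>j\<in>{j \<in> I - B. \<mu> < j}. least_var_quot I \<mu> (?t j)) =
      (\<Sum>j\<in>{j \<in> I - B. \<mu> < j}. (-1) ^ pos (insert j B0) j * var j *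
        least_var_quot I \<mu> (g (insert j B0)))"
  proof (rule sum.cong[OF refl], clarify)
    fix j assume "\<mu> < j"
    then have "j \<notin> {i \<in> I. i < \<mu>}" "lookup (single \<mu> 1) j = (0::nat)"
      by (auto simp: lookup_single when_def)
    then show "least_var_quot I \<mu> (?t j) =
        (-1) ^ pos (insert j B0) j * var j * least_var_quot I \<mu> (g (insert j B0))"
      unfolding least_var_quot_def mult.assoc quot_avoiding_neg_one_power_mult
      by (simp add: quot_avoiding_var_mult)
  qed
  finally show ?thesis by (simp add: B0_def)
qed

lemma koszul_diff_homotopy:
  fixes g :: "nat set \<Rightarrow> 'k::field poly_ring"
  assumes "finite I" "B \<subseteq> I"
  shows "koszul_diff I (koszul_homotopy I g) B + koszul_homotopy I (koszul_diff I g) B =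
    g B - koszul_proj I g B"
proof (cases "B = {}")
  case True
  have "koszul_diff I (koszul_homotopy I g) {} = (\<Sum>j\<in>I. var j * least_var_quot I j (g {}))"
    by (auto simp: koszul_diff_def koszul_homotopy_def pos_insert_least[of "{}"] intro!: sum.cong)
  moreover have "koszul_homotopy I (koszul_diff I g) {} = 0"
    by (simp add: koszul_homotopy_def)
  ultimately show ?thesis
    using True sum_var_mult_least_var_quot[OF assms(1), of "g {}"]
    by (simp add: koszul_proj_def eq_diff_eq)
next
  case False
  define T where "T = {j \<in> I. j < Min B}"
  have "{i \<in> I. i < j} = {i \<in> T. i < j}" if "j \<in> T" for j
    using that by (auto simp: T_def)
  then have quot_eq: "least_var_quot I j = least_var_quot T j" if "j \<in> T" for j
    using that by (simp add: least_var_quot_def)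
  have "(\<Sum>j\<in>T. var j * least_var_quot I j (g B)) = (\<Sum>j\<in>T. var j * least_var_quot T j (g B))"
    by (intro sum.cong refl) (simp add: quot_eq)
  then have "(\<Sum>j\<in>T. var j * least_var_quot I j (g B)) + quot_avoiding T 0 (g B) = g B"
    using sum_var_mult_least_var_quot[of T "g B"] assms(1) by (simp add: T_def)
  (* the two sums over j > Min B cancel *)
  then show ?thesis
    using koszul_diff_homotopy_nonempty[OF assms False, of g]
      koszul_homotopy_diff_nonempty[OF assms False, of g]
    by (simp add: koszul_proj_def False T_def)
qed

definition in_total_degree ::
    "nat set \<Rightarrow> nat set \<Rightarrow> nat \<Rightarrow> (nat set \<times> nat set \<Rightarrow> 'a::zero) \<Rightarrow> bool" where
  "in_total_degree X Y n c \<longleftrightarrow>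
     (\<forall>A B. c (A, B) \<noteq> 0 \<longrightarrow> A \<subseteq> X \<and> B \<subseteq> Y \<and> 2 \<le> card A \<and> card A + card B = n + 2)"

definition total_diff :: "nat set \<Rightarrow> nat set \<Rightarrow> (nat set \<times> nat set \<Rightarrow> 'k::field poly_ring) \<Rightarrow>
    nat set \<times> nat set \<Rightarrow> 'k poly_ring" where
  "total_diff X Y c = (\<lambda>(A, B). if A \<subseteq> X \<and> B \<subseteq> Y \<and> 2 \<le> card A then
     koszul_diff X (\<lambda>A. c (A, B)) A + (-1) ^ (card A - 2) * koszul_diff Y (\<lambda>B. c (A, B)) B
   else 0)"

definition total_primitive :: "nat set \<Rightarrow> nat set \<Rightarrow> (nat set \<times> nat set \<Rightarrow> 'k::field poly_ring) \<Rightarrow>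
    nat set \<times> nat set \<Rightarrow> 'k poly_ring" where
  "total_primitive X Y c = (\<lambda>(A, B).
     (-1) ^ (card A - 2) * koszul_homotopy Y (\<lambda>B. c (A, B)) B +
     (if B = {} then koszul_homotopy X (\<lambda>A. quot_avoiding Y 0 (c (A, {}))) A else 0))"

lemma total_diff_cycleD:
  assumes "total_diff X Y c = (\<lambda>_. 0)" "A \<subseteq> X" "B \<subseteq> Y" "2 \<le> card A"
  shows "koszul_diff X (\<lambda>A. c (A, B)) A = (-1) ^ (card A - 1) * koszul_diff Y (\<lambda>B. c (A, B)) B"
proof -
  have "koszul_diff X (\<lambda>A. c (A, B)) A + (-1) ^ (card A - 2) * koszul_diff Y (\<lambda>B. c (A, B)) B = 0"
    using fun_cong[OF assms(1), of "(A, B)"] assms(2-4) by (simp add: total_diff_def)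
  moreover have "card A - 1 = Suc (card A - 2)" using assms(4) by linarith
  ultimately show ?thesis by (simp add: eq_neg_iff_add_eq_0)
qed

lemma koszul_diff_avoiding_part_eq_0:
  assumes "finite X" "X \<inter> Y = {}" "in_total_degree X Y n c" "n \<noteq> 0"
    and "total_diff X Y c = (\<lambda>_. 0)"
  shows "koszul_diff X (\<lambda>A. quot_avoiding Y 0 (c (A, {}))) A = 0"
proof (cases "A \<subseteq> X \<and> 2 \<le> card A")
  case True
  have "koszul_diff X (\<lambda>A. quot_avoiding Y 0 (c (A, {}))) A =
      quot_avoiding Y 0 (koszul_diff X (\<lambda>A. c (A, {})) A)"
    using assms(2) by (simp add: quot_avoiding_koszul_diff)
  also have "\<dots> = (-1) ^ (card A - 1) * quot_avoiding Y 0 (koszul_diff Y (\<lambda>B. c (A, B)) {})"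
    using total_diff_cycleD[OF assms(5)] True by (simp add: quot_avoiding_neg_one_power_mult)
  also have "quot_avoiding Y 0 (koszul_diff Y (\<lambda>B. c (A, B)) {}) = 0"
    by (simp add: quot_avoiding_koszul_diff_eq_0)
  finally show ?thesis by simp
next
  case False
  show ?thesis
  proof (cases "A \<subseteq> X")
    case True
    then have card_lt: "card (insert i A) < n + 2" for i
      using False finite_subset[OF True assms(1)] assms(4) by (simp add: card_insert_if)
    have "c (insert i A, {}) = 0" for i
      using assms(3) card_lt[of i] unfolding in_total_degree_def by fastforce
    then show ?thesis by (simp add: koszul_diff_def)
  next
    case False
    then show ?thesis by (simp add: koszul_diff_def)
  qed
qed

lemma koszul_diff_vertical_primitive:
  fixes c :: "nat set \<times> nat set \<Rightarrow> 'k::field poly_ring"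
  assumes "finite X" "finite Y" "X \<inter> Y = {}" "total_diff X Y c = (\<lambda>_. 0)"
    and "A' \<subseteq> X" "B' \<subseteq> Y" "2 \<le> card A'"
  shows "koszul_diff X (\<lambda>A. (-1) ^ (card A - 2) * koszul_homotopy Y (\<lambda>B. c (A, B)) B') A' =
    koszul_homotopy Y (koszul_diff Y (\<lambda>B. c (A', B))) B'"
proof -
  let ?s = "(-1) ^ (card A' - 1) :: 'k poly_ring"
  have "koszul_diff X (\<lambda>A. (-1) ^ (card A - 2) * koszul_homotopy Y (\<lambda>B. c (A, B)) B') A' =
      koszul_diff X (\<lambda>A. ?s * koszul_homotopy Y (\<lambda>B. c (A, B)) B') A'"
  proof (rule koszul_diff_cong)
    fix j assume "j \<in> X - A'"
    then have "card (insert j A') - 2 = card A' - 1"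
      using finite_subset[OF assms(5,1)] by simp
    then show "(-1) ^ (card (insert j A') - 2) * koszul_homotopy Y (\<lambda>B. c (insert j A', B)) B' =
        ?s * koszul_homotopy Y (\<lambda>B. c (insert j A', B)) B'"
      by simp
  qed
  also have "\<dots> = ?s * koszul_homotopy Y (\<lambda>B. koszul_diff X (\<lambda>A. c (A, B)) A') B'"
    using assms(2,3)
    by (simp add: koszul_diff_neg_one_power_mult koszul_homotopy_koszul_diff_commute Int_commute)
  also have "\<dots> = ?s * koszul_homotopy Y (\<lambda>B. ?s * koszul_diff Y (\<lambda>B. c (A', B)) B) B'"
    using total_diff_cycleD[OF assms(4,5) _ assms(7)] by (simp cong: koszul_homotopy_cong)
  also have "\<dots> = koszul_homotopy Y (koszul_diff Y (\<lambda>B. c (A', B))) B'"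
    by (simp add: koszul_homotopy_neg_one_power_mult power_add[symmetric] mult.assoc[symmetric])
  finally show ?thesis .
qed

lemma total_diff_total_primitive:
  fixes c :: "nat set \<times> nat set \<Rightarrow> 'k::field poly_ring"
  assumes "finite X" "finite Y" "X \<inter> Y = {}" "in_total_degree X Y n c" "n \<noteq> 0"
    and "total_diff X Y c = (\<lambda>_. 0)"
  shows "total_diff X Y (total_primitive X Y c) = c"
proof (rule ext, clarify)
  fix A' B'
  let ?d = "total_primitive X Y c"
  let ?g = "\<lambda>B. c (A', B)"
  let ?P = "\<lambda>A. quot_avoiding Y 0 (c (A, {}))"
  show "total_diff X Y ?d (A', B') = c (A', B')"
  proof (cases "A' \<subseteq> X \<and> B' \<subseteq> Y \<and> 2 \<le> card A'")
    case False
    then show ?thesis using assms(4) by (auto simp: total_diff_def in_total_degree_def)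
  next
    case True
    then have A': "A' \<subseteq> X" "2 \<le> card A'" and B': "B' \<subseteq> Y" by simp_all
    have horizontal: "koszul_diff X (\<lambda>A. ?d (A, B')) A' =
        koszul_homotopy Y (koszul_diff Y ?g) B' + (if B' = {} then ?P A' else 0)"
    proof (cases "B' = {}")
      case True
      have "koszul_homotopy X (koszul_diff X ?P) A' = 0"
        using koszul_diff_avoiding_part_eq_0[OF assms(1,3-6)]
        by (simp add: koszul_homotopy_def least_var_quot_def)
      moreover have "koszul_proj X ?P A' = 0"
        using A'(2) by (auto simp: koszul_proj_def)
      ultimately have "koszul_diff X (koszul_homotopy X ?P) A' = ?P A'"
        using koszul_diff_homotopy[OF assms(1) A'(1), of ?P] by simp
      then show ?thesis
        using True koszul_diff_vertical_primitive[OF assms(1-3,6) A'(1) B' A'(2)]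
        by (simp add: total_primitive_def koszul_diff_add)
    next
      case False
      then show ?thesis
        using False koszul_diff_vertical_primitive[OF assms(1-3,6) A'(1) B' A'(2)]
        by (simp add: total_primitive_def koszul_diff_add koszul_diff_0)
    qed
    have vertical: "koszul_diff Y (\<lambda>B. ?d (A', B)) B' =
        (-1) ^ (card A' - 2) * koszul_diff Y (koszul_homotopy Y ?g) B'"
      by (simp add: total_primitive_def koszul_diff_neg_one_power_mult cong: koszul_diff_cong)
    have "total_diff X Y ?d (A', B') =
        koszul_diff Y (koszul_homotopy Y ?g) B' + koszul_homotopy Y (koszul_diff Y ?g) B' +
        (if B' = {} then ?P A' else 0)"
      using True by (simp add: total_diff_def horizontal vertical mult.assoc[symmetric]
          power_add[symmetric])
    also have "\<dots> = c (A', B')"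
      using koszul_diff_homotopy[OF assms(2) B', of ?g] by (simp add: koszul_proj_def)
    finally show ?thesis .
  qed
qed

lemma in_total_degree_total_primitive:
  assumes "finite X" "finite Y" "in_total_degree X Y n c"
  shows "in_total_degree X Y (Suc n) (total_primitive X Y c)"
  unfolding in_total_degree_def
proof (intro allI impI)
  fix A B assume nonzero: "total_primitive X Y c (A, B) \<noteq> 0"
  have "koszul_homotopy Y (\<lambda>B. c (A, B)) B \<noteq> 0 \<or>
      B = {} \<and> koszul_homotopy X (\<lambda>A. quot_avoiding Y 0 (c (A, {}))) A \<noteq> 0"
  proof (rule ccontr)
    assume "\<not> ?thesis"
    then have "total_primitive X Y c (A, B) = 0" by (auto simp: total_primitive_def)
    with nonzero show False by contradiction
  qed
  then consider "koszul_homotopy Y (\<lambda>B. c (A, B)) B \<noteq> 0"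
    | "B = {}" "koszul_homotopy X (\<lambda>A. quot_avoiding Y 0 (c (A, {}))) A \<noteq> 0"
    by blast
  then show "A \<subseteq> X \<and> B \<subseteq> Y \<and> 2 \<le> card A \<and> card A + card B = Suc n + 2"
  proof cases
    case 1
    then have B: "B \<subseteq> Y" "B \<noteq> {}" "c (A, B - {Min B}) \<noteq> 0"
      by (auto dest: koszul_homotopy_neq_0D)
    moreover have "finite B" using B(1) assms(2) by (rule finite_subset)
    then have "card (B - {Min B}) = card B - 1" "card B \<ge> 1"
      using B(2) by (simp_all add: Suc_leI card_gt_0_iff)
    ultimately show ?thesis using assms(3) unfolding in_total_degree_def by fastforce
  next
    case 2
    then have A: "A \<subseteq> X" "A \<noteq> {}" "c (A - {Min A}, {}) \<noteq> 0"
      by (auto dest: koszul_homotopy_neq_0D)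
    moreover have "finite A" using A(1) assms(1) by (rule finite_subset)
    then have "card (A - {Min A}) = card A - 1" "card A \<ge> 1"
      using A(2) by (simp_all add: Suc_leI card_gt_0_iff)
    ultimately show ?thesis using assms(3) \<open>B = {}\<close> unfolding in_total_degree_def by fastforce
  qed
qed

lemma in_S_add: "in_S p a \<Longrightarrow> in_S p b \<Longrightarrow> in_S p (a + b)"
  unfolding in_S_def by (meson Un_iff keys_add subsetD)

lemma in_S_uminus: "in_S p a \<Longrightarrow> in_S p (- a)"
  unfolding in_S_def by simp

lemma in_S_neg_one_power_mult: "in_S p a \<Longrightarrow> in_S p ((-1) ^ k * a)"
  by (simp add: minus_one_power_iff in_S_uminus)

lemma in_S_quot_avoiding:
  assumes "in_S p s"
  shows "in_S p (quot_avoiding T e s)"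
  unfolding in_S_def
proof
  fix m assume "m \<in> keys (quot_avoiding T e s)"
  then have "m + e \<in> keys s"
    by (simp add: in_keys_iff lookup_quot_avoiding split: if_splits)
  then have "keys (m + e) \<subseteq> {1..2*p}" using assms by (simp add: in_S_def)
  moreover have "keys m \<subseteq> keys (m + e)"
    by (auto simp: in_keys_iff lookup_add)
  ultimately show "keys m \<subseteq> {1..2*p}" by blast
qed

lemma in_S_koszul_homotopy: "(\<And>B. in_S p (g B)) \<Longrightarrow> in_S p (koszul_homotopy I g B)"
  by (simp add: koszul_homotopy_def least_var_quot_def in_S_uminus in_S_quot_avoiding)
    (simp add: in_S_def)

lemma in_S_total_primitive:
  "(\<And>AB. in_S p (c AB)) \<Longrightarrow> in_S p (total_primitive X Y c AB)"
  by (cases AB) (auto simp: total_primitive_def in_S_def[of p 0]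
      intro!: in_S_add in_S_neg_one_power_mult in_S_koszul_homotopy in_S_quot_avoiding)

lemma chainF_iff:
  "chainF p n c \<longleftrightarrow> in_total_degree (Vidx p) (Widx p) n c \<and> (\<forall>AB. in_S p (c AB))"
proof -
  have "in_S p 0" by (simp add: in_S_def)
  then have "chainF p n c \<longleftrightarrow> (\<forall>AB. c AB \<noteq> 0 \<longrightarrow> valid_idx p n AB) \<and> (\<forall>AB. in_S p (c AB))"
    unfolding chainF_def by metis
  also have "(\<forall>AB. c AB \<noteq> 0 \<longrightarrow> valid_idx p n AB) \<longleftrightarrow> in_total_degree (Vidx p) (Widx p) n c"
    by (simp add: in_total_degree_def valid_idx_def)
  finally show ?thesis .
qed

lemma dF_eq_total_diff: "dF p = total_diff (Vidx p) (Widx p)"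
  by (auto simp: fun_eq_iff dF_def dh_def dv_def total_diff_def koszul_diff_def)

lemma Vidx_Int_Widx: "Vidx p \<inter> Widx p = {}"
  by (auto simp: Vidx_def Widx_def)

theorem proposition7p6:
  fixes p n :: nat
  assumes "p \<ge> 3" and "n \<noteq> 0"
  shows "\<forall>c :: nat set \<times> nat set \<Rightarrow> 'k::field poly_ring.
           chainF p n c \<and> dF p c = (\<lambda>_. 0) \<longrightarrow>
           (\<exists>d. chainF p (Suc n) d \<and> dF p d = c)"
proof (intro allI impI)
  fix c :: "nat set \<times> nat set \<Rightarrow> 'k poly_ring"
  assume "chainF p n c \<and> dF p c = (\<lambda>_. 0)"
  then have deg: "in_total_degree (Vidx p) (Widx p) n c" and S: "\<forall>AB. in_S p (c AB)"
    and cycle: "total_diff (Vidx p) (Widx p) c = (\<lambda>_. 0)"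
    by (simp_all add: chainF_iff dF_eq_total_diff)
  have fin: "finite (Vidx p)" "finite (Widx p)"
    by (simp_all add: Vidx_def Widx_def)
  let ?d = "total_primitive (Vidx p) (Widx p) c"
  have "\<forall>AB. in_S p (?d AB)" using S by (blast intro: in_S_total_primitive)
  then have "chainF p (Suc n) ?d"
    using in_total_degree_total_primitive[OF fin deg] by (simp add: chainF_iff)
  moreover have "dF p ?d = c"
    using total_diff_total_primitive[OF fin Vidx_Int_Widx deg assms(2) cycle]
    by (simp add: dF_eq_total_diff)
  ultimately show "\<exists>d. chainF p (Suc n) d \<and> dF p d = c" by blast
qed

end
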